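(* Let $0<q<1$ and let $n,k$ be integers with $1\le n\le k$. Then \[ \sum_{\substack{s_1,\dots,s_n\ge1\\ s_1+\cdots+s_n=k}}\zeta[s_1+1,s_2,\dots,s_n] = \zeta[k+1], \] the sum being over all $n$-tuples of positive integers with sum $k$.
   Context: Fix $0<q<1$. For real $x$, $[x]_q := (1-q^x)/(1-q)$. For positive integers $s_1,\dots,s_N$ with $s_1>1$, $\zeta[s_1,\dots,s_N] := \sum_{k_1>\cdots>k_N>0}\prod_{j=1}^N q^{(s_j-1)k_j}/[k_j]_q^{s_j}$ (sum over positive integers). *)

theory Defs
  imports "HOL-Analysis.Analysis"
begin

definition qint :: "real \<Rightarrow> real \<Rightarrow> real" where
  "qint q x = (1 - q powr x) / (1 - q)"

definition zeta_index :: "nat \<Rightarrow> nat list set" where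
  "zeta_index N = {ks. length ks = N \<and> sorted_wrt (>) ks \<and> (\<forall>k\<in>set ks. 0 < k)}"

definition qzeta :: "real \<Rightarrow> nat list \<Rightarrow> real" where
  "qzeta q s = (\<Sum>\<^sub>\<infinity>ks\<in>zeta_index (length s).
      \<Prod>j<length s. q ^ ((s!j - 1) * ks!j) / (qint q (real (ks!j))) ^ (s!j))"

end

theory Submission
  imports Defs
begin

(* Write [k] for qint q k, a_k = 1/[k] and b_k = q^k/[k], so that the factor of zeta[s_1,...,s_N]
   at an index k_j is a_k b_k^(s_j - 1).  Marking each s_j - 1 by a power of t turns the factor into
   f_t(k) = a_k/(1 - t b_k).  The generating function of the left-hand sides (over k = n + d) is then
   the sum of b_m f_t(m) P_(n-1)(m) over m, where P_j(m) sums f_t(k_1)...f_t(k_j) over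
   m > k_1 > ... > k_j > 0, while the generating function of the right-hand sides is the sum of
   f_t(p) b_p^n over p.  To identify the two, use the kernel C(k,m) = q^(km) D(k+m)/(D(k) D(m)) with
   D(n) = f_t(1)...f_t(n): it is symmetric, C(0,m) = 1 and C(k,m) -> 0, and the identity
   f_t(k+1) C(k+1,m) = b_m (C(k,m) - C(k+1,m)) telescopes to sum_(k>k') f_t(k) C(k,m) = b_m C(k',m).
   Expanding b_m by this identity with k' = 0 and summing over m by induction on j gives
   sum_m b_m f_t(m) P_j(m) = sum_p f_t(p) b_p^(j+1).  Comparing coefficients of t^d ends the proof. *)

definition compositions :: "nat \<Rightarrow> nat \<Rightarrow> nat list set" where
  "compositions N K = {s. length s = N \<and> (\<forall>x\<in>set s. 1 \<le> x) \<and> sum_list s = K}"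

lemma finite_compositions: "finite (compositions N K)"
proof (rule finite_subset)
  show "compositions N K \<subseteq> {s. set s \<subseteq> {0..K} \<and> length s = N}"
    by (auto simp: compositions_def member_le_sum_list)
  show "finite {s. set s \<subseteq> {0..K} \<and> length s = N}"
    by (rule finite_lists_length_eq) simp
qed

lemma compositions_0: "compositions 0 K = (if K = 0 then {[]} else {})"
  by (auto simp: compositions_def)

lemma length_le_sum_list: "\<forall>x\<in>set s. 1 \<le> x \<Longrightarrow> length s \<le> sum_list (s :: nat list)"
  by (induction s) auto

lemma compositions_Suc:
  "compositions (Suc N) (Suc N + d) = (\<Union>e\<le>d. (\<lambda>s. Suc e # s) ` compositions N (N + (d - e)))"
proof (intro equalityI subsetI)
  fix s assume "s \<in> compositions (Suc N) (Suc N + d)"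
  then obtain x s' where s: "s = x # s'" "1 \<le> x" "length s' = N" "\<forall>y\<in>set s'. 1 \<le> y"
      "x + sum_list s' = Suc N + d"
    by (auto simp: compositions_def length_Suc_conv)
  moreover from s(3,4) have "N \<le> sum_list s'"
    using length_le_sum_list by blast
  ultimately show "s \<in> (\<Union>e\<le>d. (\<lambda>s. Suc e # s) ` compositions N (N + (d - e)))"
    by (auto simp: compositions_def intro!: bexI[of _ "x - 1"] image_eqI[of _ _ s'])
qed (auto simp: compositions_def)

lemma sum_compositions_Suc:
  "(\<Sum>s\<in>compositions (Suc N) (Suc N + d). F s)
     = (\<Sum>e\<le>d. \<Sum>s\<in>compositions N (N + (d - e)). F (Suc e # s))"
proof -
  have "(\<Sum>s\<in>compositions (Suc N) (Suc N + d). F s)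
      = (\<Sum>e\<le>d. \<Sum>s\<in>(\<lambda>s. Suc e # s) ` compositions N (N + (d - e)). F s)"
    unfolding compositions_Suc by (rule sum.UNION_disjoint) (auto simp: finite_compositions)
  also have "\<dots> = (\<Sum>e\<le>d. \<Sum>s\<in>compositions N (N + (d - e)). F (Suc e # s))"
    by (simp add: sum.reindex inj_on_def)
  finally show ?thesis .
qed

lemma finite_zeta_index_below: "finite (zeta_index N \<inter> lists {..<m})"
proof (rule finite_subset)
  show "zeta_index N \<inter> lists {..<m} \<subseteq> {s. set s \<subseteq> {..<m} \<and> length s = N}"
    by (auto simp: zeta_index_def)
  show "finite {s. set s \<subseteq> {..<m} \<and> length s = N}"
    by (rule finite_lists_length_eq) simp
qed

lemma zeta_index_0: "zeta_index 0 = {[]}"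
  by (auto simp: zeta_index_def)

lemma zeta_index_Suc:
  "zeta_index (Suc N) = (\<Union>k\<in>{0<..}. Cons k ` (zeta_index N \<inter> lists {..<k}))"
  by (auto simp: zeta_index_def length_Suc_conv image_iff)

lemma zeta_index_Suc_below:
  "zeta_index (Suc N) \<inter> lists {..<m} = (\<Union>k\<in>{0<..<m}. Cons k ` (zeta_index N \<inter> lists {..<k}))"
  by (auto simp: zeta_index_def length_Suc_conv image_iff) (meson less_trans)

lemma nonneg_double_sums_swap:
  fixes g :: "nat \<Rightarrow> nat \<Rightarrow> real"
  assumes nonneg: "\<And>i j. 0 \<le> g i j" and inner: "\<And>i. g i sums h i" and outer: "h sums S"
  shows "(\<lambda>j. \<Sum>i. g i j) sums S" and "summable (\<lambda>i. g i j)"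
proof -
  have "0 \<le> h i" for i
    using sums_le[OF _ sums_zero inner[of i]] nonneg by auto
  then have outer': "(h has_sum S) UNIV"
    using sums_nonneg_imp_has_sum[OF outer] by simp
  have inner': "((\<lambda>j. (\<lambda>(i, j). g i j) (i, j)) has_sum h i) UNIV" for i
    using sums_nonneg_imp_has_sum[OF inner[of i]] nonneg by simp
  have "(\<lambda>(i, j). g i j) summable_on UNIV \<times> UNIV"
    using summable_on_SigmaI[OF inner' has_sum_imp_summable[OF outer']] nonneg by auto
  then have "((\<lambda>(i, j). g i j) has_sum S) (UNIV \<times> UNIV)"
    using has_sum_SigmaI[OF inner' outer'] by blast
  then have swapped: "((\<lambda>(j, i). g i j) has_sum S) (UNIV \<times> UNIV)"
    by (subst (asm) has_sum_swap) (simp add: case_prod_unfold)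
  show summable: "summable (\<lambda>i. g i j)" for j
    using summable_on_SigmaD1[of "\<lambda>j i. g i j" UNIV "\<lambda>_. UNIV" j] swapped nonneg
    by (auto simp: has_sum_imp_summable summable_on_UNIV_nonneg_real_iff)
  have "((\<lambda>i. g i j) has_sum (\<Sum>i. g i j)) UNIV" for j
    using sums_nonneg_imp_has_sum[OF summable_sums[OF summable]] nonneg by simp
  then have "((\<lambda>j. \<Sum>i. g i j) has_sum S) UNIV"
    by (intro has_sum_Sigma'[OF swapped]) (simp add: case_prod_unfold)
  then show "(\<lambda>j. \<Sum>i. g i j) sums S"
    by (rule has_sum_imp_sums)
qed

lemma powser_sums_swap_nonneg:
  fixes c :: "nat \<Rightarrow> nat \<Rightarrow> real"
  assumes "0 < t" and nonneg: "\<And>m d. 0 \<le> c m d"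
    and inner: "\<And>m. (\<lambda>d. c m d * t ^ d) sums F m" and outer: "F sums S"
  shows "(\<lambda>d. (\<Sum>m. c m d) * t ^ d) sums S" and "summable (\<lambda>m. c m d)"
proof -
  have nonneg': "0 \<le> c m d * t ^ d" for m d
    using assms(1) nonneg by simp
  have "summable (\<lambda>m. c m d * t ^ d * (1 / t ^ d))" for d
    by (rule summable_mult2) (rule nonneg_double_sums_swap(2)[OF nonneg' inner outer])
  then show summable: "summable (\<lambda>m. c m d)" for d
    using assms(1) by simp
  have "(\<Sum>m. c m d * t ^ d) = (\<Sum>m. c m d) * t ^ d" for d
    by (rule suminf_mult2[OF summable, symmetric])
  then show "(\<lambda>d. (\<Sum>m. c m d) * t ^ d) sums S"
    using nonneg_double_sums_swap(1)[OF nonneg' inner outer] by simp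
qed

lemma powser_const_coeff_eq_0_at_right:
  fixes c :: "nat \<Rightarrow> real"
  assumes "0 < r" and zero: "\<And>t. 0 < t \<Longrightarrow> t < r \<Longrightarrow> (\<lambda>d. c d * t ^ d) sums 0"
  shows "c 0 = 0"
proof -
  define g where "g x = (\<Sum>d. c d * x ^ d)" for x :: real
  have "summable (\<lambda>d. c d * (r / 2) ^ d)"
    using zero[of "r / 2"] assms(1) by (simp add: sums_iff)
  then have "isCont g 0"
    unfolding g_def by (rule isCont_powser) (use assms(1) in simp)
  then have "(g \<longlongrightarrow> c 0) (at_right 0)"
    by (simp add: isCont_def filterlim_at_split g_def)
  moreover have "eventually (\<lambda>x. 0 < x \<and> x < r) (at_right (0 :: real))"
    using assms(1) by (auto simp: eventually_at_right_field)
  then have "eventually (\<lambda>x. g x = 0) (at_right 0)"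
    by eventually_elim (auto simp: g_def intro: sums_unique[symmetric] zero)
  then have "(g \<longlongrightarrow> 0) (at_right 0)"
    by (rule tendsto_eventually)
  ultimately show "c 0 = 0"
    using tendsto_unique trivial_limit_at_right_real by blast
qed

lemma powser_coeffs_eq_0_at_right:
  fixes c :: "nat \<Rightarrow> real"
  assumes "0 < r" and zero: "\<And>t. 0 < t \<Longrightarrow> t < r \<Longrightarrow> (\<lambda>d. c d * t ^ d) sums 0"
  shows "c d = 0"
proof (induction d rule: less_induct)
  case (less d)
  have "(\<lambda>i. c (i + d) * t ^ i) sums 0" if t: "0 < t" "t < r" for t
  proof -
    have "(\<lambda>i. c (i + d) * t ^ (i + d)) sums 0"
      using zero[OF t] less by (subst sums_iff_shift) simp
    from sums_divide[OF this, of "t ^ d"] show ?thesis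
      using t by (simp add: power_add)
  qed
  from powser_const_coeff_eq_0_at_right[OF assms(1) this] show ?case
    by simp
qed

lemma powser_coeffs_unique_at_right:
  fixes A B :: "nat \<Rightarrow> real"
  assumes "0 < r"
    and "\<And>t. 0 < t \<Longrightarrow> t < r \<Longrightarrow> (\<lambda>d. A d * t ^ d) sums S t"
    and "\<And>t. 0 < t \<Longrightarrow> t < r \<Longrightarrow> (\<lambda>d. B d * t ^ d) sums S t"
  shows "A d = B d"
proof -
  have "(\<lambda>d. (A d - B d) * t ^ d) sums 0" if "0 < t" "t < r" for t
    using sums_diff[OF assms(2,3)[OF that]] by (simp add: algebra_simps)
  from powser_coeffs_eq_0_at_right[OF assms(1) this] show ?thesis
    by simp
qed

locale qzeta_setting =
  fixes q :: real
  assumes q_pos: "0 < q" and q_less_1: "q < 1"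
begin

lemma qint_of_nat: "qint q (real k) = (1 - q ^ k) / (1 - q)"
  using q_pos by (simp add: qint_def powr_realpow)

lemma qint_0 [simp]: "qint q 0 = 0"
  using q_pos by (simp add: qint_def)

lemma qint_ge_1: "1 \<le> k \<Longrightarrow> 1 \<le> qint q (real k)"
  using q_pos q_less_1 power_decreasing[of 1 k q] by (simp add: qint_of_nat field_simps)

lemma qint_nonneg: "0 \<le> qint q (real k)"
  using qint_ge_1[of k] by (cases "k = 0") auto

lemma qint_le: "qint q (real k) \<le> 1 / (1 - q)"
  using q_pos q_less_1 by (simp add: qint_of_nat divide_right_mono)

lemma qint_add: "qint q (real (m + k)) = qint q (real m) + q ^ m * qint q (real k)"
  unfolding qint_of_nat using q_less_1 by (simp add: field_simps power_add)

definition qa :: "nat \<Rightarrow> real" where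
  "qa k = 1 / qint q (real k)"

definition qb :: "nat \<Rightarrow> real" where
  "qb k = q ^ k / qint q (real k)"

lemma qa_0 [simp]: "qa 0 = 0" and qb_0 [simp]: "qb 0 = 0"
  by (simp_all add: qa_def qb_def)

lemma qb_eq: "qb k = q ^ k * qa k"
  by (simp add: qa_def qb_def)

lemma qa_nonneg: "0 \<le> qa k"
  using qint_nonneg[of k] by (simp add: qa_def)

lemma qa_le_1: "qa k \<le> 1"
  using qint_ge_1[of k] by (cases "k = 0") (auto simp: qa_def)

lemma qa_ge: "1 \<le> k \<Longrightarrow> 1 - q \<le> qa k"
  using qint_le[of k] qint_ge_1[of k] q_less_1 by (simp add: qa_def field_simps)

lemma qb_nonneg: "0 \<le> qb k"
  using q_pos qa_nonneg by (simp add: qb_eq)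

lemma qb_pos: "1 \<le> k \<Longrightarrow> 0 < qb k"
  using q_pos qint_ge_1[of k] by (simp add: qb_def)

lemma qb_le_power: "qb k \<le> q ^ k"
  using q_pos qa_le_1[of k] by (simp add: qb_eq mult_left_le)

lemma qb_le_1: "qb k \<le> 1"
  using qb_le_power[of k] q_pos q_less_1 by (meson less_imp_le order_trans power_le_one)

lemma qb_power_le: "1 \<le> j \<Longrightarrow> qb k ^ j \<le> q ^ k"
  using power_decreasing[of 1 j "qb k"] qb_nonneg[of k] qb_le_1[of k] qb_le_power[of k] by simp

lemma summable_qa_qb_power:
  assumes "1 \<le> j"
  shows "summable (\<lambda>k. qa k * qb k ^ j)"
proof (rule summable_comparison_test')
  show "summable (\<lambda>k. q ^ k)"
    using q_pos q_less_1 by (intro summable_geometric) simp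
  show "norm (qa k * qb k ^ j) \<le> q ^ k" for k
    using mult_left_le_one_le[of "qb k ^ j" "qa k"] qb_power_le[OF assms, of k]
      qa_nonneg[of k] qa_le_1[of k] qb_nonneg[of k] by simp
qed

definition qzeta_term :: "nat \<Rightarrow> nat \<Rightarrow> real" where
  "qzeta_term s k = q ^ ((s - 1) * k) / qint q (real k) ^ s"

lemma qzeta_term_eq: "1 \<le> s \<Longrightarrow> qzeta_term s k = qa k * qb k ^ (s - 1)"
proof -
  assume "1 \<le> s"
  have "q ^ ((s - 1) * k) = (q ^ k) ^ (s - 1)"
    by (simp add: mult.commute power_mult)
  with \<open>1 \<le> s\<close> show ?thesis
    by (cases s) (simp_all add: qzeta_term_def qa_def qb_def power_divide)
qed

lemma qzeta_term_Suc: "1 \<le> s \<Longrightarrow> qzeta_term (Suc s) k = qb k * qzeta_term s k"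
  by (cases s) (simp_all add: qzeta_term_eq)

lemma qzeta_term_nonneg: "0 \<le> qzeta_term s k"
  unfolding qzeta_term_def using q_pos qint_nonneg[of k] by simp

lemma qzeta_term_0: "1 \<le> s \<Longrightarrow> qzeta_term s 0 = 0"
  by (simp add: qzeta_term_eq)

definition qzeta_below :: "nat list \<Rightarrow> nat \<Rightarrow> real" where
  "qzeta_below s m =
     (\<Sum>ks\<in>zeta_index (length s) \<inter> lists {..<m}. \<Prod>j<length s. qzeta_term (s ! j) (ks ! j))"

lemma qzeta_below_Nil [simp]: "qzeta_below [] m = 1"
  by (simp add: qzeta_below_def zeta_index_0)

lemma qzeta_below_nonneg: "0 \<le> qzeta_below s m"
  unfolding qzeta_below_def by (intro sum_nonneg prod_nonneg) (auto simp: qzeta_term_nonneg)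

lemma qzeta_below_Cons:
  "qzeta_below (x # s) m = (\<Sum>k\<in>{0<..<m}. qzeta_term x k * qzeta_below s k)"
proof -
  have "qzeta_below (x # s) m =
      (\<Sum>k\<in>{0<..<m}. \<Sum>ks\<in>Cons k ` (zeta_index (length s) \<inter> lists {..<k}).
         \<Prod>j<Suc (length s). qzeta_term ((x # s) ! j) (ks ! j))"
    unfolding qzeta_below_def length_Cons zeta_index_Suc_below
    by (rule sum.UNION_disjoint) (auto simp: finite_zeta_index_below)
  also have "\<dots> = (\<Sum>k\<in>{0<..<m}. qzeta_term x k * qzeta_below s k)"
    by (simp add: qzeta_below_def sum.reindex inj_on_def prod.lessThan_Suc_shift sum_distrib_left
        del: prod.lessThan_Suc)
  finally show ?thesis .
qed

lemma qzeta_Cons: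
  assumes "1 \<le> x" and summable: "summable (\<lambda>k. qzeta_term x k * qzeta_below s k)"
  shows "qzeta q (x # s) = (\<Sum>k. qzeta_term x k * qzeta_below s k)"
proof -
  define N where "N = length s"
  define F where "F ks = (\<Prod>j<Suc N. qzeta_term ((x # s) ! j) (ks ! j))" for ks
  define g where "g = (\<lambda>k. qzeta_term x k * qzeta_below s k)"
  define A where "A = Sigma {0<..} (\<lambda>k. zeta_index N \<inter> lists {..<k})"
  have inner: "((\<lambda>ks. (\<lambda>(k, ks). F (k # ks)) (k, ks)) has_sum g k) (zeta_index N \<inter> lists {..<k})"
    for k
    by (rule has_sum_finiteI[OF finite_zeta_index_below])
      (simp add: F_def g_def qzeta_below_def N_def sum_distrib_left prod.lessThan_Suc_shift
        del: prod.lessThan_Suc)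
  have "(g has_sum (\<Sum>k. g k)) UNIV"
    using summable unfolding g_def
    by (intro sums_nonneg_imp_has_sum summable_sums) (simp_all add: qzeta_term_nonneg qzeta_below_nonneg)
  then have outer: "(g has_sum (\<Sum>k. g k)) {0<..}"
    by (rule has_sum_cong_neutral[THEN iffD1, rotated -1]) (auto simp: g_def qzeta_term_0[OF assms(1)])
  have "(\<lambda>(k, ks). F (k # ks)) summable_on A"
    unfolding A_def using summable_on_SigmaI[OF inner has_sum_imp_summable[OF outer]]
    by (simp add: F_def prod_nonneg qzeta_term_nonneg)
  then have "((\<lambda>(k, ks). F (k # ks)) has_sum (\<Sum>k. g k)) A"
    unfolding A_def by (rule has_sum_SigmaI[OF inner outer])
  then have "((\<lambda>p. F ((\<lambda>(k, ks). k # ks) p)) has_sum (\<Sum>k. g k)) A"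
    by (simp add: case_prod_unfold)
  moreover have "bij_betw (\<lambda>(k, ks). k # ks) A (zeta_index (Suc N))"
    unfolding bij_betw_def A_def zeta_index_Suc by (auto simp: inj_on_def)
  ultimately have "(F has_sum (\<Sum>k. g k)) (zeta_index (Suc N))"
    using has_sum_reindex_bij_betw by blast
  moreover have "qzeta q (x # s) = infsum F (zeta_index (Suc N))"
    unfolding qzeta_def F_def N_def qzeta_term_def length_Cons ..
  ultimately show ?thesis
    by (simp add: infsumI g_def)
qed

lemma qzeta_singleton: "1 \<le> j \<Longrightarrow> qzeta q [Suc j] = (\<Sum>k. qa k * qb k ^ j)"
  using qzeta_Cons[of "Suc j" "[]"] summable_qa_qb_power[of j] by (simp add: qzeta_term_eq)

definition comp_qzeta_below :: "nat \<Rightarrow> nat \<Rightarrow> nat \<Rightarrow> real" where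
  "comp_qzeta_below N d m = (\<Sum>s\<in>compositions N (N + d). qzeta_below s m)"

definition comp_qzeta_lead :: "nat \<Rightarrow> nat \<Rightarrow> nat \<Rightarrow> real" where
  "comp_qzeta_lead N d k =
     (\<Sum>s\<in>compositions (Suc N) (Suc N + d). qzeta_term (hd s) k * qzeta_below (tl s) k)"

lemma comp_qzeta_below_nonneg: "0 \<le> comp_qzeta_below N d m"
  unfolding comp_qzeta_below_def by (intro sum_nonneg qzeta_below_nonneg)

lemma comp_qzeta_lead_eq:
  "comp_qzeta_lead N d k = (\<Sum>e\<le>d. qa k * qb k ^ e * comp_qzeta_below N (d - e) k)"
  unfolding comp_qzeta_lead_def sum_compositions_Suc
  by (simp add: comp_qzeta_below_def qzeta_term_eq sum_distrib_left)

lemma comp_qzeta_below_Suc: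
  "comp_qzeta_below (Suc N) d m = (\<Sum>k\<in>{0<..<m}. comp_qzeta_lead N d k)"
proof -
  have "s = hd s # tl s" if "s \<in> compositions (Suc N) (Suc N + d)" for s
    using that by (cases s) (auto simp: compositions_def)
  then have "comp_qzeta_below (Suc N) d m
      = (\<Sum>s\<in>compositions (Suc N) (Suc N + d). qzeta_below (hd s # tl s) m)"
    unfolding comp_qzeta_below_def by (intro sum.cong) auto
  then show ?thesis
    by (simp add: qzeta_below_Cons comp_qzeta_lead_def sum.swap[of _ "{0<..<m}"])
qed

definition gf :: "real \<Rightarrow> nat \<Rightarrow> real" where
  "gf t k = qa k / (1 - t * qb k)"

definition gf_prod :: "real \<Rightarrow> nat \<Rightarrow> real" where
  "gf_prod t n = (\<Prod>i\<in>{1..n}. gf t i)"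

definition kernel :: "real \<Rightarrow> nat \<Rightarrow> nat \<Rightarrow> real" where
  "kernel t k m = q ^ (k * m) * gf_prod t (k + m) / (gf_prod t k * gf_prod t m)"

fun trunc_gf :: "real \<Rightarrow> nat \<Rightarrow> nat \<Rightarrow> real" where
  "trunc_gf t 0 m = 1"
| "trunc_gf t (Suc j) m = (\<Sum>k<m. gf t k * trunc_gf t j k)"

lemma gf_0 [simp]: "gf t 0 = 0"
  by (simp add: gf_def)

lemma gf_prod_Suc: "gf_prod t (Suc n) = gf_prod t n * gf t (Suc n)"
  by (simp add: gf_prod_def atLeastAtMostSuc_conv mult.commute)

lemma gf_prod_0 [simp]: "gf_prod t 0 = 1"
  by (simp add: gf_prod_def)

lemma kernel_commute: "kernel t k m = kernel t m k"
  by (simp add: kernel_def mult.commute add.commute)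

context
  fixes t :: real
  assumes t_nonneg: "0 \<le> t" and t_less_1: "t < 1"
begin

lemma t_qb_less_1: "t * qb k < 1"
  using t_nonneg t_less_1 qb_le_1[of k] mult_left_le[of "qb k" t] by linarith

lemma gf_pos: "1 \<le> k \<Longrightarrow> 0 < gf t k"
  using t_qb_less_1[of k] qint_ge_1[of k] by (simp add: gf_def qa_def)

lemma gf_nonneg: "0 \<le> gf t k"
  using gf_pos[of k] by (cases "k = 0") auto

lemma gf_ge: "1 \<le> k \<Longrightarrow> 1 - q \<le> gf t k"
proof -
  assume "1 \<le> k"
  have "0 < 1 - t * qb k" "1 - t * qb k \<le> 1"
    using t_qb_less_1[of k] t_nonneg qb_nonneg[of k] by auto
  then have "qa k \<le> gf t k"
    using qa_nonneg[of k] by (simp add: gf_def divide_simps mult_left_le)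
  with qa_ge[OF \<open>1 \<le> k\<close>] show ?thesis
    by simp
qed

lemma gf_le: "gf t k \<le> 1 / (1 - t)"
proof -
  have "1 - t \<le> 1 - t * qb k"
    using qb_le_1[of k] t_nonneg mult_left_le[of "qb k" t] by simp
  then show ?thesis
    unfolding gf_def using t_less_1 qa_le_1[of k] qa_nonneg[of k] by (intro frac_le) auto
qed

lemma gf_sums: "(\<lambda>e. qa k * (t * qb k) ^ e) sums gf t k"
proof -
  have "norm (t * qb k) < 1"
    using t_qb_less_1[of k] t_nonneg qb_nonneg[of k] by simp
  from sums_mult[OF geometric_sums[OF this], of "qa k"] show ?thesis
    by (simp add: gf_def divide_inverse)
qed

lemma inverse_gf: "1 \<le> k \<Longrightarrow> 1 / gf t k = qint q (real k) - t * q ^ k"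
  using qint_ge_1[of k] t_qb_less_1[of k] by (simp add: gf_def qa_def qb_def field_simps)

lemma inverse_gf_add:
  assumes "1 \<le> k"
  shows "1 / gf t (k + m) = qint q (real m) + q ^ m / gf t k"
proof -
  have "1 / gf t (k + m) = qint q (real (m + k)) - t * q ^ (m + k)"
    using inverse_gf[of "k + m"] assms by (simp add: add.commute)
  also have "\<dots> = qint q (real m) + q ^ m * (qint q (real k) - t * q ^ k)"
    by (simp only: qint_add) (simp add: power_add algebra_simps)
  also have "\<dots> = qint q (real m) + q ^ m / gf t k"
    by (simp add: inverse_gf[OF assms, symmetric])
  finally show ?thesis .
qed

lemma gf_prod_pos: "0 < gf_prod t n"
  unfolding gf_prod_def by (rule prod_pos) (auto intro: gf_pos)

lemma kernel_0 [simp]: "kernel t 0 m = 1"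
  using gf_prod_pos[of m] by (simp add: kernel_def)

lemma kernel_pos: "0 < kernel t k m"
  using gf_prod_pos q_pos by (simp add: kernel_def)

lemma kernel_Suc: "kernel t (Suc k) m = kernel t k m * q ^ m * gf t (Suc k + m) / gf t (Suc k)"
  using gf_pos[of "Suc k"] gf_prod_pos[of k] gf_prod_pos[of m] gf_prod_pos[of "k + m"]
  by (simp add: kernel_def gf_prod_Suc power_add field_simps)

lemma kernel_telescope:
  assumes "1 \<le> m"
  shows "gf t (Suc k) * kernel t (Suc k) m = qb m * (kernel t k m - kernel t (Suc k) m)"
proof -
  define F G X where "F = gf t (Suc k)" and "G = gf t (Suc k + m)" and "X = kernel t k m"
  have F: "0 < F" and G: "0 < G"
    using gf_pos by (simp_all add: F_def G_def)
  have "1 / G = qint q (real m) + q ^ m / F"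
    unfolding F_def G_def by (rule inverse_gf_add) simp
  then have "F - q ^ m * G = qint q (real m) * F * G"
    using F G by (simp add: field_simps)
  then have "qb m * (F - q ^ m * G) = (qb m * qint q (real m)) * F * G"
    by (simp add: mult_ac)
  also have "\<dots> = q ^ m * G * F"
    using qint_ge_1[OF assms] by (simp add: qb_def)
  finally have key: "qb m * (F - q ^ m * G) = q ^ m * G * F" .
  have "qb m * (X - X * q ^ m * G / F) = X * (qb m * (F - q ^ m * G)) / F"
    using F by (simp add: field_simps)
  also have "\<dots> = F * (X * q ^ m * G / F)"
    unfolding key using F by (simp add: field_simps)
  finally show ?thesis
    unfolding kernel_Suc F_def G_def X_def by (rule sym)
qed

lemma kernel_le:
  assumes "1 \<le> m"
  shows "kernel t k m \<le> (1 / (2 - q)) ^ k"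
proof (induction k)
  case (Suc k)
  have "qb m * (1 - q) \<le> 1 - q"
    using qb_nonneg[of m] qb_le_1[of m] q_less_1 by (intro mult_left_le_one_le) auto
  then have "qb m * (2 - q) \<le> qb m + gf t (Suc k)"
    using gf_ge[of "Suc k"] by (auto simp: algebra_simps)
  then have "kernel t (Suc k) m * (qb m * (2 - q)) \<le> kernel t (Suc k) m * (qb m + gf t (Suc k))"
    using kernel_pos[of "Suc k" m] by (simp add: mult_left_mono)
  also have "\<dots> = qb m * kernel t k m"
    using kernel_telescope[OF assms, of k] by (simp add: algebra_simps)
  finally have "qb m * (kernel t (Suc k) m * (2 - q)) \<le> qb m * kernel t k m"
    by (simp add: mult_ac)
  then have "kernel t (Suc k) m * (2 - q) \<le> kernel t k m"
    using qb_pos[OF assms] by (rule mult_left_le_imp_le)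
  also have "\<dots> \<le> (1 / (2 - q)) ^ k"
    by (rule Suc)
  finally show ?case
    using q_less_1 by (simp add: pos_le_divide_eq field_simps)
qed simp

lemma kernel_tendsto_0: "1 \<le> m \<Longrightarrow> (\<lambda>k. kernel t k m) \<longlonglongrightarrow> 0"
proof (rule Lim_null_comparison[of _ "\<lambda>k. (1 / (2 - q)) ^ k"])
  assume "1 \<le> m"
  then show "\<forall>\<^sub>F k in sequentially. norm (kernel t k m) \<le> (1 / (2 - q)) ^ k"
    using kernel_le kernel_pos by (simp add: less_imp_le)
  show "(\<lambda>k. (1 / (2 - q)) ^ k) \<longlonglongrightarrow> 0"
    using q_pos q_less_1 by (intro LIMSEQ_power_zero) auto
qed

lemma gf_kernel_tail_sums:
  assumes "1 \<le> m"
  shows "(\<lambda>k. if k' < k then gf t k * kernel t k m else 0) sums (qb m * kernel t k' m)"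
proof -
  define F where "F i = qb m * kernel t (i + k') m" for i
  have "F \<longlonglongrightarrow> qb m * 0"
    unfolding F_def
    by (intro tendsto_mult tendsto_const LIMSEQ_ignore_initial_segment kernel_tendsto_0 assms)
  then have "(\<lambda>i. F i - F (Suc i)) sums F 0"
    using telescope_sums' by fastforce
  moreover have "F i - F (Suc i) = gf t (i + Suc k') * kernel t (i + Suc k') m" for i
    using kernel_telescope[OF assms, of "i + k'"] by (simp add: F_def algebra_simps)
  ultimately have "(\<lambda>i. (\<lambda>k. if k' < k then gf t k * kernel t k m else 0) (i + Suc k'))
      sums (qb m * kernel t k' m)"
    by (simp add: F_def)
  then show ?thesis
    by (subst (asm) sums_iff_shift) simp
qed

lemma gf_kernel_sums:
  assumes "1 \<le> k"
  shows "(\<lambda>m. gf t m * kernel t k m) sums qb k"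
proof -
  have "(\<lambda>m. if 0 < m then gf t m * kernel t m k else 0) = (\<lambda>m. gf t m * kernel t k m)"
    by (auto simp: fun_eq_iff kernel_commute[of t k])
  with gf_kernel_tail_sums[OF assms, of 0] show ?thesis
    by simp
qed

lemma trunc_gf_nonneg: "0 \<le> trunc_gf t j m"
  by (induction j arbitrary: m) (auto intro!: sum_nonneg mult_nonneg_nonneg gf_nonneg)

lemma gf_trunc_gf_kernel_sums:
  assumes "1 \<le> p"
  shows "(\<lambda>m. gf t m * trunc_gf t j m * kernel t m p) sums (qb p ^ Suc j)"
proof (induction j)
  case 0
  then show ?case
    using gf_kernel_sums[OF assms] by (simp add: kernel_commute[of t _ p])
next
  case (Suc j)
  define g where
    "g k m = (if k < m then gf t m * kernel t m p else 0) * (gf t k * trunc_gf t j k)" for k m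
  have "0 \<le> g k m" for k m
    unfolding g_def using gf_nonneg trunc_gf_nonneg kernel_pos by (simp add: less_imp_le)
  moreover have "g k sums (qb p * kernel t k p * (gf t k * trunc_gf t j k))" for k
    unfolding g_def by (intro sums_mult2 gf_kernel_tail_sums assms)
  moreover have "(\<lambda>k. qb p * kernel t k p * (gf t k * trunc_gf t j k)) sums (qb p * qb p ^ Suc j)"
    using sums_mult[OF Suc, of "qb p"] by (simp add: algebra_simps)
  ultimately have "(\<lambda>m. \<Sum>k. g k m) sums (qb p * qb p ^ Suc j)"
    by (rule nonneg_double_sums_swap(1))
  moreover have "(\<Sum>k. g k m) = gf t m * trunc_gf t (Suc j) m * kernel t m p" for m
  proof -
    have "(\<Sum>k. g k m) = (\<Sum>k<m. g k m)"
      by (rule suminf_finite) (auto simp: g_def)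
    then show ?thesis
      by (simp add: g_def sum_distrib_left algebra_simps)
  qed
  ultimately show ?case
    by simp
qed

lemma summable_gf_qb_power: "summable (\<lambda>p. gf t p * qb p ^ Suc j)"
proof (rule summable_comparison_test')
  show "summable (\<lambda>p. 1 / (1 - t) * q ^ p)"
    using q_pos q_less_1 by (intro summable_mult summable_geometric) auto
  show "norm (gf t p * qb p ^ Suc j) \<le> 1 / (1 - t) * q ^ p" for p
  proof -
    have "gf t p * qb p ^ Suc j \<le> 1 / (1 - t) * q ^ p"
      using gf_le[of p] gf_nonneg[of p] qb_nonneg[of p] qb_power_le[of "Suc j" p] t_less_1
      by (intro mult_mono) auto
    then show ?thesis
      using gf_nonneg[of p] qb_nonneg[of p] by simp
  qed
qed

lemma qb_gf_trunc_gf_sums: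
  "(\<lambda>m. qb m * gf t m * trunc_gf t j m) sums (\<Sum>p. gf t p * qb p ^ Suc j)"
proof -
  define g where "g p m = gf t m * trunc_gf t j m * kernel t m p * gf t p" for p m
  have "0 \<le> g p m" for p m
    unfolding g_def using gf_nonneg trunc_gf_nonneg kernel_pos by (simp add: less_imp_le)
  moreover have "g p sums (gf t p * qb p ^ Suc j)" for p
  proof (cases "p = 0")
    case False
    then have "g p sums (qb p ^ Suc j * gf t p)"
      unfolding g_def by (intro sums_mult2 gf_trunc_gf_kernel_sums) simp
    then show ?thesis
      by (simp add: mult.commute)
  qed (unfold g_def, simp)
  ultimately have "(\<lambda>m. \<Sum>p. g p m) sums (\<Sum>p. gf t p * qb p ^ Suc j)"
    by (rule nonneg_double_sums_swap(1)[OF _ _ summable_sums[OF summable_gf_qb_power]])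
  moreover have "(\<Sum>p. g p m) = qb m * gf t m * trunc_gf t j m" for m
  proof (cases "m = 0")
    case False
    then have "(\<lambda>p. g p m) sums (gf t m * trunc_gf t j m * qb m)"
      unfolding g_def using sums_mult[OF gf_kernel_sums[of m], of "gf t m * trunc_gf t j m"] False
      by (simp add: mult_ac)
    then show ?thesis
      by (simp add: sums_iff algebra_simps)
  qed (simp add: g_def)
  ultimately show ?thesis
    by simp
qed

lemma gf_cauchy_product:
  assumes "\<And>d. 0 \<le> h d" and "(\<lambda>d. h d * t ^ d) sums H"
  shows "(\<lambda>d. (\<Sum>e\<le>d. qa k * qb k ^ e * h (d - e)) * t ^ d) sums (gf t k * H)"
proof -
  have "summable (\<lambda>e. norm (qa k * (t * qb k) ^ e))"
    using gf_sums[of k] qa_nonneg[of k] qb_nonneg[of k] t_nonneg by (simp add: sums_iff)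
  moreover have "summable (\<lambda>d. norm (h d * t ^ d))"
    using assms t_nonneg by (simp add: sums_iff)
  ultimately have "(\<lambda>d. \<Sum>e\<le>d. qa k * (t * qb k) ^ e * (h (d - e) * t ^ (d - e))) sums (gf t k * H)"
    using Cauchy_product_sums gf_sums[of k] assms(2) by (fastforce simp: sums_iff)
  moreover have "qa k * (t * qb k) ^ e * (h (d - e) * t ^ (d - e)) = qa k * qb k ^ e * h (d - e) * t ^ d"
    if "e \<le> d" for d e
    using that by (simp add: power_mult_distrib power_add[symmetric])
  ultimately show ?thesis
    by (simp add: sum_distrib_right)
qed

lemma comp_qzeta_below_gf: "(\<lambda>d. comp_qzeta_below N d m * t ^ d) sums trunc_gf t N m"
proof (induction N arbitrary: m)
  case 0
  have "(\<lambda>d. comp_qzeta_below 0 d m * t ^ d) = (\<lambda>d. if d = 0 then 1 else 0)"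
    by (auto simp: fun_eq_iff comp_qzeta_below_def compositions_0)
  then show ?case
    using sums_single[of 0 "\<lambda>_. 1 :: real"] by simp
next
  case (Suc N)
  have "(\<lambda>d. comp_qzeta_lead N d k * t ^ d) sums (gf t k * trunc_gf t N k)" for k
    unfolding comp_qzeta_lead_eq by (rule gf_cauchy_product[OF comp_qzeta_below_nonneg Suc])
  then have "(\<lambda>d. \<Sum>k\<in>{0<..<m}. comp_qzeta_lead N d k * t ^ d)
      sums (\<Sum>k\<in>{0<..<m}. gf t k * trunc_gf t N k)"
    by (rule sums_sum)
  moreover have "(\<Sum>k\<in>{0<..<m}. gf t k * trunc_gf t N k) = (\<Sum>k<m. gf t k * trunc_gf t N k)"
    by (rule sum.mono_neutral_left) auto
  ultimately show ?case
    by (simp add: comp_qzeta_below_Suc sum_distrib_right)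
qed

lemma comp_qzeta_lead_gf: "(\<lambda>d. comp_qzeta_lead N d k * t ^ d) sums (gf t k * trunc_gf t N k)"
  unfolding comp_qzeta_lead_eq
  by (rule gf_cauchy_product[OF comp_qzeta_below_nonneg comp_qzeta_below_gf])

end

lemma comp_qzeta_lead_nonneg: "0 \<le> comp_qzeta_lead N d k"
  unfolding comp_qzeta_lead_def
  by (intro sum_nonneg mult_nonneg_nonneg qzeta_term_nonneg qzeta_below_nonneg)

lemma sum_qb_comp_qzeta_lead_gf:
  assumes "0 < t" "t < 1"
  shows "(\<lambda>d. (\<Sum>m. qb m * comp_qzeta_lead N d m) * t ^ d) sums (\<Sum>p. gf t p * qb p ^ Suc N)"
    and "summable (\<lambda>m. qb m * comp_qzeta_lead N d m)"
proof -
  have t: "0 \<le> t" "t < 1"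
    using assms by auto
  have nonneg: "0 \<le> qb m * comp_qzeta_lead N d m" for m d
    by (simp add: qb_nonneg comp_qzeta_lead_nonneg)
  have "(\<lambda>d. comp_qzeta_lead N d m * t ^ d) sums (gf t m * trunc_gf t N m)" for m
    using comp_qzeta_lead_gf[OF t] .
  then have inner:
    "(\<lambda>d. qb m * comp_qzeta_lead N d m * t ^ d) sums (qb m * gf t m * trunc_gf t N m)" for m
    using sums_mult by (fastforce simp: mult.assoc)
  show "(\<lambda>d. (\<Sum>m. qb m * comp_qzeta_lead N d m) * t ^ d) sums (\<Sum>p. gf t p * qb p ^ Suc N)"
    and "summable (\<lambda>m. qb m * comp_qzeta_lead N d m)"
    by (rule powser_sums_swap_nonneg[OF assms(1) nonneg inner qb_gf_trunc_gf_sums[OF t]])+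
qed

lemma sum_qa_qb_power_gf:
  assumes "0 < t" "t < 1"
  shows "(\<lambda>d. (\<Sum>m. qa m * qb m ^ (Suc N + d)) * t ^ d) sums (\<Sum>p. gf t p * qb p ^ Suc N)"
proof -
  have "(\<lambda>d. qa m * qb m ^ (Suc N + d) * t ^ d) sums (gf t m * qb m ^ Suc N)" for m
    using sums_mult2[OF gf_sums[of t m], of "qb m ^ Suc N"] assms
    by (simp add: power_add power_mult_distrib algebra_simps)
  from powser_sums_swap_nonneg(1)[OF assms(1) _ this summable_sums[OF summable_gf_qb_power]]
  show ?thesis
    using assms qa_nonneg qb_nonneg by simp
qed

lemma sum_qb_comp_qzeta_lead_eq:
  "(\<Sum>m. qb m * comp_qzeta_lead N d m) = (\<Sum>m. qa m * qb m ^ (Suc N + d))"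
  using sum_qb_comp_qzeta_lead_gf(1) sum_qa_qb_power_gf
  by (rule powser_coeffs_unique_at_right[OF zero_less_one])

lemma sum_compositions_qzeta_eq:
  "(\<Sum>s\<in>compositions (Suc N) (Suc N + d). qzeta q ((hd s + 1) # tl s))
     = (\<Sum>m. qb m * comp_qzeta_lead N d m)"
proof -
  define C where "C = compositions (Suc N) (Suc N + d)"
  define f where "f s = (\<lambda>m. qzeta_term (hd s + 1) m * qzeta_below (tl s) m)" for s
  have f_nonneg: "0 \<le> f s m" for s m
    by (simp add: f_def qzeta_term_nonneg qzeta_below_nonneg)
  have hd_pos: "1 \<le> hd s" if "s \<in> C" for s
    using that by (cases s) (auto simp: C_def compositions_def)
  have lead: "qb m * comp_qzeta_lead N d m = (\<Sum>s\<in>C. f s m)" for m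
    unfolding comp_qzeta_lead_def C_def[symmetric] sum_distrib_left
    by (intro sum.cong refl) (simp add: f_def qzeta_term_Suc[OF hd_pos])
  have "summable (\<lambda>m. qb m * comp_qzeta_lead N d m)"
    by (rule sum_qb_comp_qzeta_lead_gf(2)[of "1 / 2"]) auto
  then have summable_f: "summable (f s)" if "s \<in> C" for s
  proof (rule summable_comparison_test')
    show "norm (f s m) \<le> qb m * comp_qzeta_lead N d m" for m
      unfolding lead using member_le_sum[OF that, of "\<lambda>s. f s m"] f_nonneg
      by (simp add: C_def finite_compositions)
  qed
  have "qzeta q ((hd s + 1) # tl s) = (\<Sum>m. f s m)" if "s \<in> C" for s
    unfolding f_def by (rule qzeta_Cons) (use summable_f[OF that] in \<open>simp_all add: f_def\<close>)
  then have "(\<Sum>s\<in>C. qzeta q ((hd s + 1) # tl s)) = (\<Sum>m. \<Sum>s\<in>C. f s m)"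
    using suminf_sum[of C f] summable_f by simp
  then show ?thesis
    unfolding C_def[symmetric] lead .
qed

theorem sum_formula:
  "(\<Sum>s\<in>compositions (Suc N) (Suc N + d). qzeta q ((hd s + 1) # tl s)) = qzeta q [Suc N + d + 1]"
  using sum_compositions_qzeta_eq sum_qb_comp_qzeta_lead_eq qzeta_singleton[of "Suc N + d"] by simp

end

theorem corollary3p3:
  fixes q :: real and n k :: nat
  assumes "0 < q" "q < 1" "1 \<le> n" "n \<le> k"
  shows "(\<Sum>s\<in>{s :: nat list. length s = n \<and> (\<forall>x\<in>set s. 1 \<le> x) \<and> sum_list s = k}.
            qzeta q ((hd s + 1) # tl s)) = qzeta q [k + 1]"
proof -
  interpret qzeta_setting q
    using assms(1,2) by unfold_locales
  obtain N where n: "n = Suc N"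
    using assms(3) by (cases n) auto
  define d where "d = k - n"
  have k: "k = Suc N + d"
    using assms(4) n by (simp add: d_def)
  have "{s. length s = n \<and> (\<forall>x\<in>set s. 1 \<le> x) \<and> sum_list s = k} = compositions (Suc N) (Suc N + d)"
    by (simp add: compositions_def n k)
  with sum_formula[of N d] show ?thesis
    by (simp add: k)
qed

end
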